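(* Let $a,b\ge0$ be integers, $c\in\mathbb Z$ and $t\ge0$ an integer. (1) If $a+b\ge1$, then $F(a,b,c,t)=F(b,a,-c,t)$. (2) If $b\ge1$, then $F(a,b,c,t)=F(a+1,b-1,c+t,t)$. (3) If $a+b\ge1$, then $F(a+1,b,0,t)=\sum_{i=0}^tF(a,b,-i,t)$.
   Context: For integers $a,b\ge0$ with $a+b\ge1$, $c\in\mathbb Z$ and $t\ge0$, $$F(a,b,c,t)=\sum_{j=0}^{a+b}(-1)^j\binom{a+b}{j}\binom{(t+1)(b-j)+a+c-1}{a+b-1},$$ with the conventions $\binom00=1$ and $\binom NK=0$ whenever $K<0$ or $N<K$ (for any integers $N,K$). *)

theory Defs
  imports Main
begin

definition ibinom :: "int \<Rightarrow> int \<Rightarrow> int" where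
  "ibinom N K = (if K < 0 \<or> N < K then 0 else int (nat N choose nat K))"

definition F :: "nat \<Rightarrow> nat \<Rightarrow> int \<Rightarrow> nat \<Rightarrow> int" where
  "F a b c t = (\<Sum>j = 0..a+b. (-1) ^ j * int ((a+b) choose j) *
      ibinom ((int t + 1) * (int b - int j) + int a + c - 1) (int a + int b - 1))"

end

theory Submission
  imports Defs
begin

text \<open>With \<open>n = a + b\<close> and \<open>N = t b + c\<close>, \<open>F a b c t\<close> is the inclusion--exclusion count of
  the ways to write \<open>N\<close> as an ordered sum of \<open>n\<close> integers in \<open>[0, t]\<close>, i.e. the coefficient
  of \<open>x\<^sup>N\<close> in \<open>(1 + x + \<dots> + x\<^sup>t)\<^sup>n\<close>. Part (2) holds because \<open>F\<close> only depends on \<open>a + b\<close> and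
  \<open>t b + c\<close>; part (1) is the symmetry \<open>N \<mapsto> t n - N\<close> of these coefficients; part (3) is
  the recursion obtained by multiplying with one more factor \<open>1 + x + \<dots> + x\<^sup>t\<close>.\<close>

fun bounded_compositions :: "nat \<Rightarrow> nat \<Rightarrow> int \<Rightarrow> int" where
  "bounded_compositions t 0 N = (if N = 0 then 1 else 0)"
| "bounded_compositions t (Suc n) N = (\<Sum>i = 0..t. bounded_compositions t n (N - int i))"

definition bounded_compositions_incl_excl :: "nat \<Rightarrow> nat \<Rightarrow> int \<Rightarrow> int" where
  "bounded_compositions_incl_excl t n N = (\<Sum>j = 0..n. (-1) ^ j * int (n choose j) *
      ibinom (N - (int t + 1) * int j + int n - 1) (int n - 1))"

lemma F_eq_incl_excl: "F a b c t = bounded_compositions_incl_excl t (a + b) (int t * int b + c)"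
  unfolding F_def bounded_compositions_incl_excl_def
  by (rule sum.cong) (simp_all add: algebra_simps)

lemma ibinom_Suc_Suc: "ibinom (N + 1) (int k + 1) = ibinom N (int k + 1) + ibinom N (int k)"
proof (cases "N < 0")
  case True
  then show ?thesis by (simp add: ibinom_def)
next
  case False
  then obtain m where "N = int m" by (metis nonneg_int_cases not_less)
  moreover have "nat (int m + 1) = Suc m" "nat (int k + 1) = Suc k" by simp_all
  ultimately show ?thesis unfolding ibinom_def by auto
qed

lemma sum_ibinom_hockey_stick:
  "(\<Sum>i = 0..t. ibinom (N - int i + int k) (int k))
     = ibinom (N + int k + 1) (int k + 1) - ibinom (N - int t + int k) (int k + 1)"
proof (induction t)
  case 0
  show ?case using ibinom_Suc_Suc[of "N + int k" k] by simp
next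
  case (Suc t)
  have "ibinom (N - int t + int k) (int k + 1) = ibinom (N - int (Suc t) + int k) (int k + 1)
      + ibinom (N - int (Suc t) + int k) (int k)"
    using ibinom_Suc_Suc[of "N - int (Suc t) + int k" k] by (simp add: algebra_simps)
  with Suc show ?case by simp
qed

lemma alternating_binomial_sum_Suc:
  fixes f :: "nat \<Rightarrow> 'a :: comm_ring_1"
  shows "(\<Sum>j = 0..Suc n. (-1) ^ j * of_nat (Suc n choose j) * f j)
       = (\<Sum>j = 0..n. (-1) ^ j * of_nat (n choose j) * (f j - f (Suc j)))"
proof -
  have shift: "(\<Sum>j = 0..n. (-1) ^ j * of_nat (n choose j) * f j)
      = f 0 - (\<Sum>j = 0..n. (-1) ^ j * of_nat (n choose Suc j) * f (Suc j))"
  proof -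
    have "(\<Sum>j = 0..n. (-1) ^ j * of_nat (n choose j) * f j)
        = (\<Sum>j = 0..Suc n. (-1) ^ j * of_nat (n choose j) * f j)"
      by (simp add: binomial_eq_0)
    then show ?thesis
      by (simp add: sum.atLeast0_atMost_Suc_shift sum_negf binomial_eq_0 del: sum.cl_ivl_Suc)
  qed
  have "(\<Sum>j = 0..Suc n. (-1) ^ j * of_nat (Suc n choose j) * f j)
      = f 0 - (\<Sum>j = 0..n. (-1) ^ j * of_nat (n choose j) * f (Suc j))
            - (\<Sum>j = 0..n. (-1) ^ j * of_nat (n choose Suc j) * f (Suc j))"
    by (simp add: sum.atLeast0_atMost_Suc_shift sum_negf sum_subtractf ring_distribs
        del: sum.cl_ivl_Suc)
  also have "\<dots> = (\<Sum>j = 0..n. (-1) ^ j * of_nat (n choose j) * (f j - f (Suc j)))"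
    by (simp add: shift right_diff_distrib sum_subtractf)
  finally show ?thesis .
qed

lemma bounded_compositions_incl_excl_Suc_Suc:
  "bounded_compositions_incl_excl t (Suc (Suc k)) N
     = (\<Sum>i = 0..t. bounded_compositions_incl_excl t (Suc k) (N - int i))"
proof -
  define f where "f j = ibinom (N - (int t + 1) * int j + int k + 1) (int k + 1)" for j
  have "(\<Sum>i = 0..t. bounded_compositions_incl_excl t (Suc k) (N - int i))
     = (\<Sum>i = 0..t. \<Sum>j = 0..Suc k. (-1) ^ j * int (Suc k choose j) *
          ibinom ((N - (int t + 1) * int j) - int i + int k) (int k))"
    unfolding bounded_compositions_incl_excl_def by (intro sum.cong refl) (simp add: algebra_simps)
  also have "\<dots> = (\<Sum>j = 0..Suc k. (-1) ^ j * int (Suc k choose j) *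
          (\<Sum>i = 0..t. ibinom ((N - (int t + 1) * int j) - int i + int k) (int k)))"
    by (subst sum.swap) (simp add: sum_distrib_left)
  also have "\<dots> = (\<Sum>j = 0..Suc k. (-1) ^ j * int (Suc k choose j) * (f j - f (Suc j)))"
    unfolding sum_ibinom_hockey_stick f_def by (intro sum.cong refl) (simp add: algebra_simps)
  also have "\<dots> = (\<Sum>j = 0..Suc (Suc k). (-1) ^ j * int (Suc (Suc k) choose j) * f j)"
    by (rule alternating_binomial_sum_Suc[symmetric])
  also have "\<dots> = bounded_compositions_incl_excl t (Suc (Suc k)) N"
    unfolding bounded_compositions_incl_excl_def f_def
    by (rule sum.cong) (simp_all add: algebra_simps)
  finally show ?thesis ..
qed

lemma bounded_compositions_one: "bounded_compositions t 1 N = (if 0 \<le> N \<and> N \<le> int t then 1 else 0)"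
proof (cases "0 \<le> N \<and> N \<le> int t")
  case True
  then obtain m where "N = int m" "m \<le> t" by (metis nat_0_le nat_le_iff)
  then show ?thesis by (simp add: sum.delta)
next
  case False
  then show ?thesis by (auto intro: sum.neutral)
qed

lemma bounded_compositions_incl_excl_eq:
  "bounded_compositions_incl_excl t (Suc k) N = bounded_compositions t (Suc k) N"
proof (induction k arbitrary: N)
  case 0
  show ?case
    unfolding One_nat_def[symmetric] bounded_compositions_one bounded_compositions_incl_excl_def
    by (simp add: ibinom_def)
next
  case (Suc k)
  then show ?case by (simp only: bounded_compositions_incl_excl_Suc_Suc bounded_compositions.simps(2))
qed

lemma bounded_compositions_reflect:
  "bounded_compositions t n N = bounded_compositions t n (int t * int n - N)"
proof (induction n arbitrary: N)
  case 0
  show ?case by simp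
next
  case (Suc n)
  have "bounded_compositions t (Suc n) N
      = (\<Sum>i = 0..t. bounded_compositions t n (int t * int n - N + int i))"
    by (simp add: Suc[of "N - _"] algebra_simps)
  also have "\<dots> = (\<Sum>i = 0..t. bounded_compositions t n (int t * int n - N + int (t - i)))"
    by (subst sum.atLeastAtMost_rev) simp
  also have "\<dots> = (\<Sum>i = 0..t. bounded_compositions t n (int t * int (Suc n) - N - int i))"
    by (intro sum.cong refl) (simp add: algebra_simps of_nat_diff)
  also have "\<dots> = bounded_compositions t (Suc n) (int t * int (Suc n) - N)" by simp
  finally show ?case .
qed

lemma F_eq_bounded_compositions:
  assumes "a + b \<ge> 1"
  shows "F a b c t = bounded_compositions t (a + b) (int t * int b + c)"
proof -
  from assms obtain k where "a + b = Suc k" by (cases "a + b") auto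
  then show ?thesis unfolding F_eq_incl_excl by (simp add: bounded_compositions_incl_excl_eq)
qed

theorem lemma4p1:
  fixes a b t :: nat and c :: int
  shows "(a + b \<ge> 1 \<longrightarrow> F a b c t = F b a (- c) t)
    \<and> (b \<ge> 1 \<longrightarrow> F a b c t = F (a + 1) (b - 1) (c + int t) t)
    \<and> (a + b \<ge> 1 \<longrightarrow> F (a + 1) b 0 t = (\<Sum>i = 0..t. F a b (- int i) t))"
proof (intro conjI impI)
  assume ab: "a + b \<ge> 1"
  have "F a b c t = bounded_compositions t (a + b) (int t * int (a + b) - (int t * int a - c))"
    using F_eq_bounded_compositions[OF ab] by (simp add: algebra_simps)
  also have "\<dots> = bounded_compositions t (b + a) (int t * int a - c)"
    by (simp only: add.commute flip: bounded_compositions_reflect)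
  also have "\<dots> = F b a (- c) t"
    using ab by (simp add: F_eq_bounded_compositions add.commute)
  finally show "F a b c t = F b a (- c) t" .
next
  assume "b \<ge> 1"
  then show "F a b c t = F (a + 1) (b - 1) (c + int t) t"
    unfolding F_eq_incl_excl by (simp add: of_nat_diff algebra_simps)
next
  assume ab: "a + b \<ge> 1"
  then have "F (a + 1) b 0 t = (\<Sum>i = 0..t. bounded_compositions t (a + b) (int t * int b - int i))"
    by (simp add: F_eq_bounded_compositions)
  also have "\<dots> = (\<Sum>i = 0..t. F a b (- int i) t)"
    using ab by (simp add: F_eq_bounded_compositions)
  finally show "F (a + 1) b 0 t = (\<Sum>i = 0..t. F a b (- int i) t)" .
qed

end
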